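(* Let $n\ge 2$ and $q=p_n$. Then for $X=F_n(q)$ the matrix $X^TX$ is invertible and the log-prime estimator satisfies $\ln\hat q=(X^TX)^{-1}X^T\ln z_n=\ln p_n$.
   Context: $z_n=(1,\dots,n)^T$; $p_n$ is the vector of all primes $\le n$ in increasing order; logarithms of vectors are entry-wise. For $1\le i\le n$, $e_{\bar i|n}\in\mathbb{R}^n$ has $k$-th entry $1$ if $i\mid k$, else $0$. For $2\le i\le n$, $f_{i|n}=\sum_{t=1}^{\lfloor \log_i n\rfloor} e_{\overline{i^t}|n}$. For $q=(q_1,\dots,q_m)^T$ with distinct entries in $\{2,\dots,n\}$, $F_n(q)=[f_{q_1|n}\ \cdots\ f_{q_m|n}]\in\mathbb{R}^{n\times m}$. *)

theory Defs
  imports Complex_Main "HOL-Computational_Algebra.Primes" "Jordan_Normal_Form.Matrix"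
begin

(* Vectors in R^n are 'real vec' of dimension n; entry k (1-based) is stored at index k-1. *)

definition z_vec :: "nat \<Rightarrow> real vec" where
  "z_vec n = vec n (\<lambda>k. real (k + 1))"

definition primes_upto :: "nat \<Rightarrow> nat list" where
  "primes_upto n = filter prime [0..<n+1]"

definition p_vec :: "nat \<Rightarrow> real vec" where
  "p_vec n = vec (length (primes_upto n)) (\<lambda>j. real (primes_upto n ! j))"

definition log_vec :: "real vec \<Rightarrow> real vec" where
  "log_vec v = map_vec ln v"

definition e_bar :: "nat \<Rightarrow> nat \<Rightarrow> real vec" where
  "e_bar i n = vec n (\<lambda>k. if i dvd (k + 1) then 1 else 0)"

definition f_vec :: "nat \<Rightarrow> nat \<Rightarrow> real vec" where
  "f_vec i n = vec n (\<lambda>k. \<Sum>t = 1..nat \<lfloor>log (real i) (real n)\<rfloor>. e_bar (i ^ t) n $ k)"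

definition F_mat :: "nat \<Rightarrow> nat list \<Rightarrow> real mat" where
  "F_mat n q = mat n (length q) (\<lambda>(k, j). f_vec (q ! j) n $ k)"

end

theory Submission
  imports Defs "Jordan_Normal_Form.Determinant"
begin

text \<open>Entry (k, j) of F_n(p_n) counts the powers p_j^t (t \<ge> 1) dividing k, i.e. it is the
  multiplicity of p_j in k. Unique factorisation therefore gives F_n(p_n) ln p_n = ln z_n
  exactly, so the least-squares estimator recovers ln p_n as soon as the Gram matrix is
  invertible. Invertibility holds because row p_j of F_n(p_n) is the j-th unit vector, so
  F_n(p_n) has trivial kernel.\<close>

lemma multiplicity_le_nat_floor_log:
  fixes p k n :: nat
  assumes p: "prime p" and k: "1 \<le> k" "k \<le> n"
  shows "multiplicity p k \<le> nat \<lfloor>log (real p) (real n)\<rfloor>"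
proof -
  let ?m = "multiplicity p k"
  have "p ^ ?m \<le> k" using k by (intro dvd_imp_le multiplicity_dvd) auto
  hence "real p powr real ?m \<le> real n"
    using k prime_gt_0_nat[OF p] by (simp add: powr_realpow flip: of_nat_power)
  hence "real ?m \<le> log (real p) (real n)"
    using le_log_iff[of "real p" "real n" "real ?m"] prime_gt_1_nat[OF p] k by auto
  thus ?thesis by linarith
qed

lemma sum_prime_power_dvd_eq_multiplicity:
  fixes p k n :: nat
  assumes p: "prime p" and k: "1 \<le> k" "k \<le> n"
  shows "(\<Sum>t = 1..nat \<lfloor>log (real p) (real n)\<rfloor>. (if p ^ t dvd k then 1 else 0 :: real))
         = real (multiplicity p k)"
proof -
  let ?L = "nat \<lfloor>log (real p) (real n)\<rfloor>"
  have "p \<noteq> 1" using p by auto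
  hence "\<And>t. p ^ t dvd k \<longleftrightarrow> t \<le> multiplicity p k"
    using power_dvd_iff_le_multiplicity[of k p] k by auto
  hence "{t \<in> {1..?L}. p ^ t dvd k} = {1..multiplicity p k}"
    using multiplicity_le_nat_floor_log[OF p k] by (auto intro: order.trans)
  moreover have "(\<Sum>t = 1..?L. (if p ^ t dvd k then 1 else 0 :: real))
                 = real (card {t \<in> {1..?L}. p ^ t dvd k})"
    by (simp add: sum.If_cases Int_def conj_commute)
  ultimately show ?thesis by simp
qed

lemma ln_eq_sum_multiplicity_ln_primes:
  fixes k n :: nat
  assumes k: "1 \<le> k" "k \<le> n"
  shows "ln (real k) = (\<Sum>p | prime p \<and> p \<le> n. real (multiplicity p k) * ln (real p))"
proof -
  have "real k = (\<Prod>p\<in>prime_factors k. real p ^ multiplicity p k)"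
    using prod_prime_factors[of k] k by (simp flip: of_nat_power of_nat_prod)
  hence "ln (real k) = (\<Sum>p\<in>prime_factors k. ln (real p ^ multiplicity p k))"
    by (simp only:) (rule ln_prod, auto simp: in_prime_factors_iff prime_gt_0_nat)
  also have "\<dots> = (\<Sum>p\<in>prime_factors k. real (multiplicity p k) * ln (real p))"
    by (intro sum.cong refl) (simp add: ln_realpow in_prime_factors_iff prime_gt_0_nat)
  also have "\<dots> = (\<Sum>p | prime p \<and> p \<le> n. real (multiplicity p k) * ln (real p))"
  proof (rule sum.mono_neutral_left)
    show "prime_factors k \<subseteq> {p. prime p \<and> p \<le> n}"
      using k by (auto simp: in_prime_factors_iff dest!: dvd_imp_le[of _ k])
  qed (use k in \<open>auto simp: in_prime_factors_iff not_dvd_imp_multiplicity_0\<close>)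
  finally show ?thesis .
qed

lemma gram_mat_mult_vec_eq_zero_imp:
  fixes X :: "'a :: linordered_idom mat"
  assumes X: "X \<in> carrier_mat n m" and v: "v \<in> carrier_vec m"
    and Gv: "(transpose_mat X * X) *\<^sub>v v = 0\<^sub>v m"
  shows "X *\<^sub>v v = 0\<^sub>v n"
proof -
  define w where "w = X *\<^sub>v v"
  have w: "w \<in> carrier_vec n" unfolding w_def using X v by simp
  have "transpose_mat X *\<^sub>v w = 0\<^sub>v m"
    using Gv X v unfolding w_def by (simp add: assoc_mult_mat_vec[of _ m n X m])
  hence "w \<bullet> w = 0"
    using transpose_vec_mult_scalar[OF X v w] v unfolding w_def by simp
  hence "(\<Sum>i\<in>{0..<n}. w $ i * w $ i) = 0" using w by (simp add: scalar_prod_def)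
  hence "\<forall>i\<in>{0..<n}. w $ i * w $ i = 0"
    by (subst (asm) sum_nonneg_eq_0_iff) auto
  thus ?thesis using w unfolding w_def[symmetric] by (intro eq_vecI) auto
qed

lemma invertible_gram_mat:
  fixes X :: "'a :: linordered_field mat"
  assumes X: "X \<in> carrier_mat n m"
    and inj: "\<And>v. v \<in> carrier_vec m \<Longrightarrow> X *\<^sub>v v = 0\<^sub>v n \<Longrightarrow> v = 0\<^sub>v m"
  shows "invertible_mat (transpose_mat X * X)"
proof -
  let ?G = "transpose_mat X * X"
  have G: "?G \<in> carrier_mat m m" using X by simp
  have "det ?G \<noteq> 0"
    using det_0_iff_vec_prod_zero[OF G] gram_mat_mult_vec_eq_zero_imp[OF X] inj by blast
  from det_non_zero_imp_unit[OF G this, of "()"]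
  obtain B where "B \<in> carrier_mat m m" "B * ?G = 1\<^sub>m m" "?G * B = 1\<^sub>m m"
    unfolding Units_def ring_mat_def by auto
  thus ?thesis using G unfolding invertible_mat_def inverts_mat_def by (auto intro!: exI[of _ B])
qed

lemma least_squares_exact_solution:
  fixes X :: "'a :: comm_ring_1 mat"
  assumes X: "X \<in> carrier_mat n m" and b: "b \<in> carrier_vec m"
    and B: "B \<in> carrier_mat m m" and BG: "inverts_mat B (transpose_mat X * X)"
  shows "B *\<^sub>v (transpose_mat X *\<^sub>v (X *\<^sub>v b)) = b"
proof -
  have "transpose_mat X *\<^sub>v (X *\<^sub>v b) = (transpose_mat X * X) *\<^sub>v b"
    using X b by (simp add: assoc_mult_mat_vec[of _ m n X m])
  hence "B *\<^sub>v (transpose_mat X *\<^sub>v (X *\<^sub>v b)) = (B * (transpose_mat X * X)) *\<^sub>v b"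
    using X b B by (simp add: assoc_mult_mat_vec[of B m m _ m])
  also have "B * (transpose_mat X * X) = 1\<^sub>m m"
    using BG B unfolding inverts_mat_def by simp
  finally show ?thesis using b by simp
qed

lemma mult_vec_eq_zero_if_unit_rows:
  fixes X :: "'a :: semiring_1 mat"
  assumes X: "X \<in> carrier_mat n m" and v: "v \<in> carrier_vec m"
    and Xv: "X *\<^sub>v v = 0\<^sub>v n"
    and unit_rows: "\<And>j. j < m \<Longrightarrow> \<exists>i<n. \<forall>j'<m. X $$ (i, j') = (if j' = j then 1 else 0)"
  shows "v = 0\<^sub>v m"
proof (rule eq_vecI)
  fix j assume "j < dim_vec (0\<^sub>v m)"
  hence j: "j < m" by simp
  then obtain i where i: "i < n" and row: "\<forall>j'<m. X $$ (i, j') = (if j' = j then 1 else 0)"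
    using unit_rows by blast
  have "0 = (X *\<^sub>v v) $ i" using Xv i by simp
  also have "\<dots> = (\<Sum>j'\<in>{0..<m}. (if j' = j then 1 else 0) * v $ j')"
    using X v i row by (simp add: scalar_prod_def)
  also have "\<dots> = v $ j" using j by (simp add: if_distrib[of "\<lambda>c. c * _"] cong: if_cong)
  finally show "v $ j = 0\<^sub>v m $ j" using j by simp
qed (use v in simp)

lemma set_primes_upto: "set (primes_upto n) = {p. prime p \<and> p \<le> n}"
  unfolding primes_upto_def by (auto simp: less_Suc_eq_le) (metis le_neq_implies_less)

lemma distinct_primes_upto: "distinct (primes_upto n)"
  unfolding primes_upto_def by simp

lemma primes_upto_nth:
  assumes "j < length (primes_upto n)"
  shows "prime (primes_upto n ! j)" "1 \<le> primes_upto n ! j" "primes_upto n ! j \<le> n"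
  using nth_mem[OF assms] prime_gt_0_nat unfolding set_primes_upto
  by (auto simp: Suc_le_eq)

lemma F_mat_primes_upto_entry:
  assumes "k < n" and "j < length (primes_upto n)"
  shows "F_mat n (primes_upto n) $$ (k, j) = real (multiplicity (primes_upto n ! j) (k + 1))"
  using assms sum_prime_power_dvd_eq_multiplicity[of "primes_upto n ! j" "k + 1" n]
    primes_upto_nth[OF assms(2)]
  by (simp add: F_mat_def f_vec_def e_bar_def)

lemma F_mat_primes_upto_mult_log_primes:
  "F_mat n (primes_upto n) *\<^sub>v log_vec (p_vec n) = log_vec (z_vec n)"
proof (rule eq_vecI)
  fix k assume "k < dim_vec (log_vec (z_vec n))"
  hence k: "k < n" by (simp add: log_vec_def z_vec_def)
  let ?q = "primes_upto n"
  have "(F_mat n ?q *\<^sub>v log_vec (p_vec n)) $ k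
        = (\<Sum>j<length ?q. (\<lambda>p. real (multiplicity p (k + 1)) * ln (real p)) (?q ! j))"
    using k F_mat_primes_upto_entry[OF k]
    by (auto simp: scalar_prod_def log_vec_def p_vec_def F_mat_def atLeast0LessThan
             intro!: sum.cong)
  also have "\<dots> = (\<Sum>p\<in>set ?q. real (multiplicity p (k + 1)) * ln (real p))"
    by (rule sum.reindex_bij_betw[OF bij_betw_nth[OF distinct_primes_upto]]) auto
  also have "\<dots> = ln (real (k + 1))"
    using ln_eq_sum_multiplicity_ln_primes[of "k + 1" n] k by (simp add: set_primes_upto)
  finally show "(F_mat n ?q *\<^sub>v log_vec (p_vec n)) $ k = log_vec (z_vec n) $ k"
    using k by (simp add: log_vec_def z_vec_def)
qed (simp add: F_mat_def log_vec_def z_vec_def)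

lemma F_mat_primes_upto_unit_row:
  assumes j: "j < length (primes_upto n)" and j': "j' < length (primes_upto n)"
  shows "F_mat n (primes_upto n) $$ (primes_upto n ! j - 1, j') = (if j' = j then 1 else 0)"
proof -
  let ?q = "primes_upto n"
  note pj = primes_upto_nth[OF j] and pj' = primes_upto_nth[OF j']
  have "F_mat n ?q $$ (?q ! j - 1, j') = real (multiplicity (?q ! j') (?q ! j))"
    using F_mat_primes_upto_entry[of "?q ! j - 1" n j'] pj j' by simp
  moreover have "?q ! j' = ?q ! j \<longleftrightarrow> j' = j"
    using distinct_primes_upto j j' nth_eq_iff_index_eq by blast
  ultimately show ?thesis
    using pj pj' by (auto simp: multiplicity_prime prime_multiplicity_other)
qed

theorem theorem3p2:
  fixes n :: nat
  assumes "n \<ge> 2"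
  defines "q \<equiv> primes_upto n"
  defines "X \<equiv> F_mat n q"
  shows "invertible_mat (transpose_mat X * X) \<and>
         (\<forall>B \<in> carrier_mat (length q) (length q).
            inverts_mat B (transpose_mat X * X) \<and> inverts_mat (transpose_mat X * X) B \<longrightarrow>
            B *\<^sub>v (transpose_mat X *\<^sub>v log_vec (z_vec n)) = log_vec (p_vec n))"
proof
  have X: "X \<in> carrier_mat n (length q)" unfolding X_def F_mat_def by simp
  have unit_rows: "\<exists>i<n. \<forall>j'<length q. X $$ (i, j') = (if j' = j then 1 else 0)"
    if "j < length q" for j
    using that primes_upto_nth[of j n] F_mat_primes_upto_unit_row[of j n]
    unfolding X_def q_def by (intro exI[of _ "q ! j - 1"]) (auto simp: q_def)
  show "invertible_mat (transpose_mat X * X)"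
    using invertible_gram_mat[OF X] mult_vec_eq_zero_if_unit_rows[OF X _ _ unit_rows] by blast
  have log_p: "log_vec (p_vec n) \<in> carrier_vec (length q)"
    unfolding log_vec_def p_vec_def q_def by simp
  show "\<forall>B \<in> carrier_mat (length q) (length q).
          inverts_mat B (transpose_mat X * X) \<and> inverts_mat (transpose_mat X * X) B \<longrightarrow>
          B *\<^sub>v (transpose_mat X *\<^sub>v log_vec (z_vec n)) = log_vec (p_vec n)"
    using least_squares_exact_solution[OF X log_p] F_mat_primes_upto_mult_log_primes[of n]
    unfolding X_def q_def by auto
qed

end
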